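(* Let $P_L$ be a probability law on $\{1,\dots,\bar L\}$. For a weight function $g$ and an activation $\sigma$ define $$\tilde{\mathcal E}_\sigma(m_k,m_v,R_k,R_v)=\mathbb E_L\,\mathbb E_{\epsilon,\chi,\xi}\,g(\epsilon,\chi)\Big[1-2m_v\,\sigma(m_k\chi+R_k\xi)_\epsilon+(m_v^2+R_v^2)\,\sigma(m_k\chi+R_k\xi)^\top\sigma(m_k\chi+R_k\xi)\Big],$$ where $L\sim P_L$ and, given $L$, $\epsilon\sim\mathrm{Unif}(\{1,\dots,L\})$, $\chi,\xi\sim\mathcal N(0,I_L)$ independent, and let $\mathsf E_\sigma=\inf_{\mathbb R^4}\tilde{\mathcal E}_\sigma$. Let $\sigma_{\mathrm{lin}}(x)_\ell=1+x_\ell$ and $\sigma_{\mathrm{softmax}}(x)_\ell=e^{x_\ell}/\sum_{\ell'=1}^Le^{x_{\ell'}}$, and write $\mathsf E_{\mathrm{lin}},\mathsf E_{\mathrm{softmax}}$ for the corresponding values. (i) For $g(\epsilon,\chi)=L\,\mathbb 1_{\epsilon=\arg\max_\ell\chi_\ell}$, letting $f(L)=\mathbb E_{\chi\sim\mathcal N(0,I_L)}\max_{1\le\ell\le L}\chi_\ell$, $$\mathsf E_{\mathrm{lin}}=1-\frac{1+(\mathbb E_Lf(L))^2}{\mathbb E_LL}\ \ge\ 1-\frac{1+f(\mathbb E_LL)^2}{\mathbb E_LL}.$$ (ii) For $g\equiv1$, $\mathsf E_{\mathrm{lin}}=1-\frac1{\mathbb E_LL}$ and $\mathsf E_{\mathrm{softmax}}=1-\mathbb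 E_L\frac1L$; consequently $\mathsf E_{\mathrm{lin}}\ge\mathsf E_{\mathrm{softmax}}$, with equality when $\mathrm{Var}(L)=0$.
   Context: In (i), $f$ is defined on positive integers; $f(\mathbb E_LL)$ for non-integer $\mathbb E_LL$ is understood via the piecewise-linear interpolation of $f$ between consecutive integers. *)

theory Defs
  imports "HOL-Probability.Probability"
begin

definition gauss :: "nat \<Rightarrow> (nat \<Rightarrow> real) measure" where
  "gauss L = PiM {1..L} (\<lambda>_. density lborel (normal_density 0 1))"

text \<open>Activation: sigma L x gives the vector sigma(x) in R^L (coordinates 1..L).\<close>
type_synonym act = "nat \<Rightarrow> (nat \<Rightarrow> real) \<Rightarrow> nat \<Rightarrow> real"
text \<open>Weight function g L eps chi.\<close>
type_synonym weight = "nat \<Rightarrow> nat \<Rightarrow> (nat \<Rightarrow> real) \<Rightarrow> real"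

definition sigma_lin :: act where
  "sigma_lin L x l = 1 + x l"

definition sigma_softmax :: act where
  "sigma_softmax L x l = exp (x l) / (\<Sum>l'\<in>{1..L}. exp (x l'))"

text \<open>Expectation over L ~ P_L, where P_L is given by weights p on {1..Lbar}.\<close>
definition EL :: "(nat \<Rightarrow> real) \<Rightarrow> nat \<Rightarrow> (nat \<Rightarrow> real) \<Rightarrow> real" where
  "EL p Lbar h = (\<Sum>L\<in>{1..Lbar}. p L * h L)"

definition Etil :: "(nat \<Rightarrow> real) \<Rightarrow> nat \<Rightarrow> act \<Rightarrow> weight \<Rightarrow>
    real \<Rightarrow> real \<Rightarrow> real \<Rightarrow> real \<Rightarrow> real" where
  "Etil p Lbar \<sigma> g mk mv Rk Rv = EL p Lbar (\<lambda>L.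
     (1 / real L) * (\<Sum>\<epsilon>\<in>{1..L}.
        \<integral>z. (let s = \<sigma> L (\<lambda>l. mk * fst z l + Rk * snd z l) in
              g L \<epsilon> (fst z) * (1 - 2 * mv * s \<epsilon> + (mv\<^sup>2 + Rv\<^sup>2) * (\<Sum>l\<in>{1..L}. (s l)\<^sup>2)))
          \<partial>(gauss L \<Otimes>\<^sub>M gauss L)))"

definition Eopt :: "(nat \<Rightarrow> real) \<Rightarrow> nat \<Rightarrow> act \<Rightarrow> weight \<Rightarrow> real" where
  "Eopt p Lbar \<sigma> g = Inf {Etil p Lbar \<sigma> g mk mv Rk Rv | mk mv Rk Rv. True}"

text \<open>g(eps,chi) = L * 1[eps = argmax chi] (ties have probability zero).\<close>
definition g_argmax :: weight where
  "g_argmax L \<epsilon> c = real L * (if c \<epsilon> = Max (c ` {1..L}) then 1 else 0)"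

definition g_one :: weight where
  "g_one L \<epsilon> c = 1"

definition fmax :: "nat \<Rightarrow> real" where
  "fmax L = (\<integral>c. Max (c ` {1..L}) \<partial>gauss L)"

definition fmax_interp :: "real \<Rightarrow> real" where
  "fmax_interp x = (let n = nat \<lfloor>x\<rfloor> in
     fmax n + (x - real n) * (fmax (Suc n) - fmax n))"

end

theory Submission
  imports Defs
begin

text \<open>
  For the linear activation the squared error is a polynomial in the Gaussians, and its
  \<open>\<epsilon>\<close>-average given \<open>L\<close> is \<open>1 - 2 m\<^sub>v (1 + m\<^sub>k F\<^sub>L) + (m\<^sub>v\<^sup>2 + R\<^sub>v\<^sup>2) (1 + m\<^sub>k\<^sup>2 + R\<^sub>k\<^sup>2) L\<close>,
  where \<open>F\<^sub>L = 0\<close> for \<open>g = 1\<close> and \<open>F\<^sub>L = f L\<close> for the argmax weight: almost surely \<open>\<chi>\<close> has a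
  unique maximal coordinate, and \<open>\<xi>\<close> at that coordinate is independent of \<open>\<chi>\<close>, hence centred.
  This is affine in \<open>(L, F\<^sub>L)\<close>, so averaging over \<open>L\<close> replaces them by \<open>M = E L\<close> and
  \<open>F = E F\<^sub>L\<close>, and completing squares gives the minimum \<open>1 - (1 + F\<^sup>2) / M\<close>.

  For softmax the outputs sum to one, so their squared norm is at least \<open>1 / L\<close> and the risk
  given \<open>L\<close> is at least \<open>1 - 1 / L\<close>, with equality at \<open>m\<^sub>v = 1\<close>, \<open>m\<^sub>k = R\<^sub>k = R\<^sub>v = 0\<close>.
  Comparing the two values is Jensen's inequality for \<open>1 / L\<close>, exact when \<open>L\<close> is constant.

  Finally \<open>f\<close> is concave on the integers: \<open>f (n + 1) - f n = E (\<xi> - max {\<chi>\<^sub>1, \<dots>, \<chi>\<^sub>n})\<^sup>+\<close>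
  decreases in \<open>n\<close>. Its tangent at \<open>\<lfloor>E L\<rfloor>\<close> bounds it from above, which gives
  \<open>E f(L) \<le> f(E L)\<close> for the piecewise-linear interpolation.
\<close>

section \<open>Standard Gaussian vectors\<close>

abbreviation std_normal :: "real measure" where
  "std_normal \<equiv> density lborel std_normal_density"

lemma prob_space_std_normal: "prob_space std_normal"
  by (rule prob_space_normal_density) simp

lemma sets_std_normal [simp, measurable_cong]: "sets std_normal = sets borel"
  by simp

lemma has_bochner_integral_std_normal_id: "has_bochner_integral std_normal (\<lambda>x. x) 0"
  using std_normal_moment_odd[of 0] by (auto intro!: has_bochner_integral_density)

lemma has_bochner_integral_std_normal_square: "has_bochner_integral std_normal (\<lambda>x. x\<^sup>2) 1"
  using std_normal_moment_even[of 1] by (auto intro!: has_bochner_integral_density simp: mult.commute)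

lemma emeasure_std_normal_singleton: "emeasure std_normal {a} = 0"
proof -
  have "emeasure std_normal {a} = (\<integral>\<^sup>+x. ennreal (std_normal_density x) * indicator {a} x \<partial>lborel)"
    by (rule emeasure_density) auto
  also have "\<dots> = 0"
    by (rule nn_integral_null_set) auto
  finally show ?thesis .
qed

interpretation std_normal_product: product_sigma_finite "\<lambda>_::nat. std_normal"
  by (simp add: product_sigma_finite_def prob_space_std_normal prob_space_imp_sigma_finite)

lemma prob_space_gauss: "prob_space (gauss L)"
  unfolding gauss_def by (intro prob_space_PiM prob_space_std_normal)

lemma measurable_gauss_coord [measurable]:
  "l \<in> {1..L} \<Longrightarrow> (\<lambda>x. x l) \<in> borel_measurable (gauss L)"
  unfolding gauss_def by (subst measurable_cong_sets[OF refl sets_std_normal[symmetric]])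
    (rule measurable_component_singleton)

lemma has_bochner_integral_gauss_coord:
  fixes h :: "real \<Rightarrow> real"
  assumes l: "l \<in> {1..L}" and [measurable]: "h \<in> borel_measurable borel"
    and h: "has_bochner_integral std_normal h I"
  shows "has_bochner_integral (gauss L) (\<lambda>x. h (x l)) I"
proof -
  have coord: "(\<lambda>x. x l) \<in> measurable (gauss L) std_normal"
    using l unfolding gauss_def by (rule measurable_component_singleton)
  have distr: "distr (gauss L) std_normal (\<lambda>x. x l) = std_normal"
    using l unfolding gauss_def by (intro distr_PiM_component) (auto simp: prob_space_std_normal)
  from h show ?thesis
    unfolding has_bochner_integral_iff
    using integrable_distr_eq[OF coord, of h] integral_distr[OF coord, of h] by (simp add: distr)
qed

lemma gauss_coord_moments:
  assumes "l \<in> {1..L}"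
  shows "has_bochner_integral (gauss L) (\<lambda>x. x l) 0"
    and "has_bochner_integral (gauss L) (\<lambda>x. (x l)\<^sup>2) 1"
  using has_bochner_integral_gauss_coord[OF assms _ has_bochner_integral_std_normal_id]
    has_bochner_integral_gauss_coord[OF assms _ has_bochner_integral_std_normal_square] by auto

lemma has_bochner_integral_pair_measure_mult:
  fixes f g :: "_ \<Rightarrow> real"
  assumes "sigma_finite_measure M1" "sigma_finite_measure M2"
    and f: "has_bochner_integral M1 f a" and g: "has_bochner_integral M2 g b"
  shows "has_bochner_integral (M1 \<Otimes>\<^sub>M M2) (\<lambda>z. f (fst z) * g (snd z)) (a * b)"
proof -
  interpret pair_sigma_finite M1 M2 using assms(1,2) by (simp add: pair_sigma_finite_def)
  have [measurable]: "f \<in> borel_measurable M1" "g \<in> borel_measurable M2"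
    using f g by (auto dest: borel_measurable_has_bochner_integral)
  have int: "integrable (M1 \<Otimes>\<^sub>M M2) (\<lambda>z. f (fst z) * g (snd z))"
  proof (rule Fubini_integrable)
    have "integrable M1 (\<lambda>x. \<bar>f x\<bar> * (\<integral>y. \<bar>g y\<bar> \<partial>M2))"
      using f by (auto simp: has_bochner_integral_iff)
    then show "integrable M1 (\<lambda>x. \<integral>y. norm (f (fst (x, y)) * g (snd (x, y))) \<partial>M2)"
      by (simp add: abs_mult)
    show "AE x in M1. integrable M2 (\<lambda>y. f (fst (x, y)) * g (snd (x, y)))"
      using g by (auto simp: has_bochner_integral_iff)
  qed measurable
  have "(\<integral>z. f (fst z) * g (snd z) \<partial>(M1 \<Otimes>\<^sub>M M2)) = (\<integral>x. (\<integral>y. f x * g y \<partial>M2) \<partial>M1)"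
    using integral_fst'[OF int] by simp
  also have "\<dots> = a * b"
    using f g by (simp add: has_bochner_integral_iff)
  finally show ?thesis
    using int by (simp add: has_bochner_integral_iff)
qed

abbreviation gauss_pair :: "nat \<Rightarrow> ((nat \<Rightarrow> real) \<times> (nat \<Rightarrow> real)) measure" where
  "gauss_pair L \<equiv> gauss L \<Otimes>\<^sub>M gauss L"

lemma measurable_gauss_pair_coord [measurable]:
  "l \<in> {1..L} \<Longrightarrow> (\<lambda>z. fst z l) \<in> borel_measurable (gauss_pair L)"
  "l \<in> {1..L} \<Longrightarrow> (\<lambda>z. snd z l) \<in> borel_measurable (gauss_pair L)"
  using measurable_compose[OF measurable_fst measurable_gauss_coord]
    measurable_compose[OF measurable_snd measurable_gauss_coord] by blast+

lemma prob_space_gauss_pair: "prob_space (gauss_pair L)"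
  by (intro prob_space_pair prob_space_gauss)

lemma has_bochner_integral_prob_space_const:
  "prob_space M \<Longrightarrow> has_bochner_integral M (\<lambda>_. c) (c::real)"
  by (simp add: has_bochner_integral_iff prob_space.prob_space finite_measure.integrable_const
      prob_space_def)

lemma has_bochner_integral_gauss_pair_const: "has_bochner_integral (gauss_pair L) (\<lambda>_. c) (c::real)"
  by (intro has_bochner_integral_prob_space_const prob_space_gauss_pair)

lemma has_bochner_integral_gauss_pair_mult:
  fixes f g :: "_ \<Rightarrow> real"
  assumes "has_bochner_integral (gauss L) f a" "has_bochner_integral (gauss L) g b"
  shows "has_bochner_integral (gauss_pair L) (\<lambda>z. f (fst z) * g (snd z)) (a * b)"
  by (intro has_bochner_integral_pair_measure_mult assms prob_space_imp_sigma_finite prob_space_gauss)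

lemma has_bochner_integral_gauss_pair_fst_snd:
  fixes f :: "_ \<Rightarrow> real"
  assumes "has_bochner_integral (gauss L) f a"
  shows "has_bochner_integral (gauss_pair L) (\<lambda>z. f (fst z)) a"
    and "has_bochner_integral (gauss_pair L) (\<lambda>z. f (snd z)) a"
proof -
  have one: "has_bochner_integral (gauss L) (\<lambda>_. 1) (1::real)"
    by (intro has_bochner_integral_prob_space_const prob_space_gauss)
  show "has_bochner_integral (gauss_pair L) (\<lambda>z. f (fst z)) a"
    using has_bochner_integral_gauss_pair_mult[OF assms one] by simp
  show "has_bochner_integral (gauss_pair L) (\<lambda>z. f (snd z)) a"
    using has_bochner_integral_gauss_pair_mult[OF one assms] by simp
qed

lemma gauss_pair_affine_moments:
  assumes l: "l \<in> {1..L}"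
  shows "has_bochner_integral (gauss_pair L) (\<lambda>z. 1 + mk * fst z l + Rk * snd z l) 1"
    and "has_bochner_integral (gauss_pair L) (\<lambda>z. (1 + mk * fst z l + Rk * snd z l)\<^sup>2) (1 + mk\<^sup>2 + Rk\<^sup>2)"
proof -
  note x = gauss_coord_moments[OF l, THEN has_bochner_integral_gauss_pair_fst_snd(1)]
  note y = gauss_coord_moments[OF l, THEN has_bochner_integral_gauss_pair_fst_snd(2)]
  have xy: "has_bochner_integral (gauss_pair L) (\<lambda>z. fst z l * snd z l) 0"
    using has_bochner_integral_gauss_pair_mult[OF gauss_coord_moments(1)[OF l] gauss_coord_moments(1)[OF l]]
    by simp
  have "has_bochner_integral (gauss_pair L) (\<lambda>z. 1 + mk * fst z l + Rk * snd z l) (1 + mk * 0 + Rk * 0)"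
    by (intro has_bochner_integral_add has_bochner_integral_mult_right x y
        has_bochner_integral_gauss_pair_const)
  then show "has_bochner_integral (gauss_pair L) (\<lambda>z. 1 + mk * fst z l + Rk * snd z l) 1"
    by simp
  have "has_bochner_integral (gauss_pair L)
      (\<lambda>z. 1 + 2 * mk * fst z l + 2 * Rk * snd z l + mk\<^sup>2 * (fst z l)\<^sup>2 + Rk\<^sup>2 * (snd z l)\<^sup>2
         + 2 * mk * Rk * (fst z l * snd z l))
      (1 + 2 * mk * 0 + 2 * Rk * 0 + mk\<^sup>2 * 1 + Rk\<^sup>2 * 1 + 2 * mk * Rk * 0)"
    by (intro has_bochner_integral_add has_bochner_integral_mult_right x y xy
        has_bochner_integral_gauss_pair_const)
  then show "has_bochner_integral (gauss_pair L) (\<lambda>z. (1 + mk * fst z l + Rk * snd z l)\<^sup>2) (1 + mk\<^sup>2 + Rk\<^sup>2)"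
    by (simp add: power2_eq_square algebra_simps)
qed

lemma AE_gauss_pair_fst:
  assumes "AE x in gauss L. P x"
  shows "AE z in gauss_pair L. P (fst z)"
proof -
  interpret prob_space "gauss L" by (rule prob_space_gauss)
  have "AE x in distr (gauss_pair L) (gauss L) fst. P x"
    unfolding distr_pair_fst[of "gauss L"] by (rule assms)
  then show ?thesis by (rule AE_distrD[OF measurable_fst])
qed

lemma gauss_coord_eq_null:
  assumes i: "i \<in> {1..L}" and j: "j \<in> {1..L}" and ij: "i \<noteq> j"
  shows "{x \<in> space (gauss L). x i = x j} \<in> null_sets (gauss L)"
proof -
  define I where "I = {1..L} - {j}"
  have I: "{1..L} = insert j I" "finite I" "j \<notin> I"
    using i j ij unfolding I_def by auto
  have gauss_insert: "gauss L = PiM (insert j I) (\<lambda>_. std_normal)"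
    unfolding gauss_def I(1) ..
  define A where "A = {x \<in> space (gauss L). x i = x j}"
  have A [measurable]: "A \<in> sets (gauss L)"
    unfolding A_def using i j by measurable
  have "emeasure (gauss L) A = (\<integral>\<^sup>+x. indicator A x \<partial>gauss L)"
    by simp
  also have "\<dots> = (\<integral>\<^sup>+x. (\<integral>\<^sup>+y. indicator A (x(j := y)) \<partial>std_normal) \<partial>PiM I (\<lambda>_. std_normal))"
    unfolding gauss_insert
    by (rule std_normal_product.product_nn_integral_insert[OF I(2,3)]) (use A gauss_insert in simp)
  also have "\<dots> = (\<integral>\<^sup>+x. 0 \<partial>PiM I (\<lambda>_. std_normal))"
  proof (rule nn_integral_cong)
    fix x assume x: "x \<in> space (PiM I (\<lambda>_. std_normal))"
    have "indicator A (x(j := y)) = (indicator {x i} y :: ennreal)" for y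
    proof -
      have "x(j := y) \<in> space (gauss L)"
        using x unfolding gauss_insert by (auto simp: space_PiM PiE_def extensional_def)
      then show ?thesis
        unfolding A_def using ij by (auto split: split_indicator)
    qed
    then show "(\<integral>\<^sup>+y. indicator A (x(j := y)) \<partial>std_normal) = 0"
      using emeasure_std_normal_singleton[of "x i"] by simp
  qed
  finally show ?thesis
    using A unfolding A_def by (simp add: null_sets_def)
qed

lemma AE_gauss_inj_on: "AE x in gauss L. inj_on x {1..L}"
proof -
  have "AE x in gauss L. i \<noteq> j \<longrightarrow> x i \<noteq> x j" if "i \<in> {1..L}" "j \<in> {1..L}" for i j
    using that by (cases "i = j") (auto intro: AE_I'[OF gauss_coord_eq_null])
  then have "AE x in gauss L. \<forall>i\<in>{1..L}. \<forall>j\<in>{1..L}. i \<noteq> j \<longrightarrow> x i \<noteq> x j"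
    by (simp add: AE_finite_all)
  then show ?thesis
    by eventually_elim (auto simp: inj_on_def)
qed

section \<open>The linear activation\<close>

definition lin_risk :: "real \<Rightarrow> real \<Rightarrow> real \<Rightarrow> real \<Rightarrow> real \<Rightarrow> real \<Rightarrow> real" where
  "lin_risk M F mk mv Rk Rv = 1 - 2 * mv * (1 + mk * F) + (mv\<^sup>2 + Rv\<^sup>2) * (1 + mk\<^sup>2 + Rk\<^sup>2) * M"

lemma Inf_lin_risk:
  assumes M: "0 < M"
  shows "Inf {lin_risk M F mk mv Rk Rv | mk mv Rk Rv. True} = 1 - (1 + F\<^sup>2) / M"
proof (rule cInf_eq_minimum)
  have "lin_risk M F F (1 / M) 0 0 = 1 - (1 + F\<^sup>2) / M"
    using M by (simp add: lin_risk_def power2_eq_square field_simps)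
  then show "1 - (1 + F\<^sup>2) / M \<in> {lin_risk M F mk mv Rk Rv | mk mv Rk Rv. True}"
    by (metis (mono_tags, lifting) mem_Collect_eq)
next
  fix x assume "x \<in> {lin_risk M F mk mv Rk Rv | mk mv Rk Rv. True}"
  then obtain mk mv Rk Rv where x: "x = lin_risk M F mk mv Rk Rv"
    by blast
  define R where "R = 1 - 2 * mv * (1 + mk * F) + mv\<^sup>2 * (1 + mk\<^sup>2) * M"
  have "mv\<^sup>2 * (1 + mk\<^sup>2) * M \<le> (mv\<^sup>2 + Rv\<^sup>2) * (1 + mk\<^sup>2 + Rk\<^sup>2) * M"
    using M by (intro mult_right_mono mult_mono) auto
  then have "R \<le> x"
    unfolding x R_def lin_risk_def by linarith
  have "M * R - (M - (1 + F\<^sup>2)) = (mv * M - 1)\<^sup>2 + (mv * M * mk - F)\<^sup>2"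
    unfolding R_def by (simp add: power2_eq_square algebra_simps)
  then have "M - (1 + F\<^sup>2) \<le> M * R"
    by (smt (verit) zero_le_power2)
  then have "(M - (1 + F\<^sup>2)) / M \<le> R"
    using M by (simp add: pos_divide_le_eq mult.commute)
  moreover have "(M - (1 + F\<^sup>2)) / M = 1 - (1 + F\<^sup>2) / M"
    using M by (simp add: diff_divide_distrib)
  ultimately have "1 - (1 + F\<^sup>2) / M \<le> R"
    by simp
  with \<open>R \<le> x\<close> show "1 - (1 + F\<^sup>2) / M \<le> x"
    by linarith
qed

definition sq_err :: "act \<Rightarrow> nat \<Rightarrow> real \<Rightarrow> real \<Rightarrow> real \<Rightarrow> real \<Rightarrow> nat \<Rightarrow>
    (nat \<Rightarrow> real) \<times> (nat \<Rightarrow> real) \<Rightarrow> real" where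
  "sq_err \<sigma> L mk mv Rk Rv \<epsilon> z = (let s = \<sigma> L (\<lambda>l. mk * fst z l + Rk * snd z l) in
     1 - 2 * mv * s \<epsilon> + (mv\<^sup>2 + Rv\<^sup>2) * (\<Sum>l\<in>{1..L}. (s l)\<^sup>2))"

definition risk_at :: "act \<Rightarrow> weight \<Rightarrow> nat \<Rightarrow> real \<Rightarrow> real \<Rightarrow> real \<Rightarrow> real \<Rightarrow> real" where
  "risk_at \<sigma> g L mk mv Rk Rv =
     1 / real L * (\<Sum>\<epsilon>\<in>{1..L}. \<integral>z. g L \<epsilon> (fst z) * sq_err \<sigma> L mk mv Rk Rv \<epsilon> z \<partial>gauss_pair L)"

lemma Etil_eq_EL_risk_at: "Etil p Lbar \<sigma> g mk mv Rk Rv = EL p Lbar (\<lambda>L. risk_at \<sigma> g L mk mv Rk Rv)"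
  by (simp add: Etil_def risk_at_def sq_err_def Let_def)

definition lin_norm_sq :: "nat \<Rightarrow> real \<Rightarrow> real \<Rightarrow> (nat \<Rightarrow> real) \<times> (nat \<Rightarrow> real) \<Rightarrow> real" where
  "lin_norm_sq L mk Rk z = (\<Sum>l\<in>{1..L}. (1 + mk * fst z l + Rk * snd z l)\<^sup>2)"

lemma sq_err_sigma_lin:
  "sq_err sigma_lin L mk mv Rk Rv \<epsilon> z =
     1 - 2 * mv * (1 + mk * fst z \<epsilon> + Rk * snd z \<epsilon>) + (mv\<^sup>2 + Rv\<^sup>2) * lin_norm_sq L mk Rk z"
  by (simp add: sq_err_def sigma_lin_def lin_norm_sq_def add.assoc)

lemma has_bochner_integral_lin_norm_sq:
  "has_bochner_integral (gauss_pair L) (lin_norm_sq L mk Rk) (real L * (1 + mk\<^sup>2 + Rk\<^sup>2))"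
proof -
  have "has_bochner_integral (gauss_pair L) (\<lambda>z. \<Sum>l\<in>{1..L}. (1 + mk * fst z l + Rk * snd z l)\<^sup>2)
      (\<Sum>l\<in>{1..L}. 1 + mk\<^sup>2 + Rk\<^sup>2)"
    by (intro has_bochner_integral_sum gauss_pair_affine_moments(2)) auto
  then show ?thesis
    by (simp add: lin_norm_sq_def[abs_def])
qed

lemma has_bochner_integral_sq_err_sigma_lin:
  assumes "\<epsilon> \<in> {1..L}"
  shows "has_bochner_integral (gauss_pair L) (sq_err sigma_lin L mk mv Rk Rv \<epsilon>)
    (lin_risk (real L) 0 mk mv Rk Rv)"
proof -
  have "has_bochner_integral (gauss_pair L)
      (\<lambda>z. 1 - 2 * mv * (1 + mk * fst z \<epsilon> + Rk * snd z \<epsilon>) + (mv\<^sup>2 + Rv\<^sup>2) * lin_norm_sq L mk Rk z)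
      (1 - 2 * mv * 1 + (mv\<^sup>2 + Rv\<^sup>2) * (real L * (1 + mk\<^sup>2 + Rk\<^sup>2)))"
    by (intro has_bochner_integral_add has_bochner_integral_diff has_bochner_integral_mult_right
        has_bochner_integral_gauss_pair_const gauss_pair_affine_moments(1)
        has_bochner_integral_lin_norm_sq assms)
  then show ?thesis
    by (simp add: sq_err_sigma_lin[abs_def] lin_risk_def algebra_simps)
qed

lemma risk_at_sigma_lin_g_one:
  assumes "1 \<le> L"
  shows "risk_at sigma_lin g_one L mk mv Rk Rv = lin_risk (real L) 0 mk mv Rk Rv"
proof -
  have "(\<integral>z. g_one L \<epsilon> (fst z) * sq_err sigma_lin L mk mv Rk Rv \<epsilon> z \<partial>gauss_pair L)
      = lin_risk (real L) 0 mk mv Rk Rv" if "\<epsilon> \<in> {1..L}" for \<epsilon>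
    using has_bochner_integral_sq_err_sigma_lin[OF that] by (simp add: g_one_def has_bochner_integral_iff)
  then show ?thesis
    using assms by (simp add: risk_at_def)
qed

definition max_coord :: "nat \<Rightarrow> (nat \<Rightarrow> real) \<Rightarrow> real" where
  "max_coord n x = Max (x ` {1..n})"

definition argmax_ind :: "nat \<Rightarrow> nat \<Rightarrow> (nat \<Rightarrow> real) \<Rightarrow> real" where
  "argmax_ind L \<epsilon> x = (if x \<epsilon> = max_coord L x then 1 else 0)"

lemma g_argmax_eq: "g_argmax L \<epsilon> x = real L * argmax_ind L \<epsilon> x"
  by (simp add: g_argmax_def argmax_ind_def max_coord_def)

lemma max_coord_attained: "1 \<le> n \<Longrightarrow> \<exists>l\<in>{1..n}. x l = max_coord n x"
  unfolding max_coord_def using Max_in[of "x ` {1..n}"] by fastforce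

lemma sum_argmax_ind_mult:
  assumes inj: "inj_on x {1..L}" and e: "e \<in> {1..L}" "x e = max_coord L x"
  shows "(\<Sum>\<epsilon>\<in>{1..L}. argmax_ind L \<epsilon> x * h \<epsilon>) = h e"
proof -
  have "argmax_ind L \<epsilon> x * h \<epsilon> = (if \<epsilon> = e then h e else 0)" if "\<epsilon> \<in> {1..L}" for \<epsilon>
  proof (cases "\<epsilon> = e")
    case False
    then have "x \<epsilon> \<noteq> max_coord L x"
      using inj_onD[OF inj _ that e(1)] e(2) by metis
    then show ?thesis
      using False by (simp add: argmax_ind_def)
  qed (simp add: argmax_ind_def e(2))
  then have "(\<Sum>\<epsilon>\<in>{1..L}. argmax_ind L \<epsilon> x * h \<epsilon>) = (\<Sum>\<epsilon>\<in>{1..L}. if \<epsilon> = e then h e else 0)"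
    by (rule sum.cong[OF refl])
  then show ?thesis
    using e(1) by simp
qed

lemma borel_measurable_max_coord [measurable]: "n \<le> m \<Longrightarrow> max_coord n \<in> borel_measurable (gauss m)"
  unfolding max_coord_def by (rule borel_measurable_Max) auto

lemma borel_measurable_argmax_ind [measurable]:
  "\<epsilon> \<in> {1..L} \<Longrightarrow> argmax_ind L \<epsilon> \<in> borel_measurable (gauss L)"
  unfolding argmax_ind_def by measurable

lemma abs_max_coord_le:
  assumes "1 \<le> n"
  shows "\<bar>max_coord n x\<bar> \<le> (\<Sum>l\<in>{1..n}. \<bar>x l\<bar>)"
proof -
  obtain l where "l \<in> {1..n}" "x l = max_coord n x"
    using max_coord_attained[OF assms] by blast
  then show ?thesis
    by (metis finite_atLeastAtMost abs_ge_zero member_le_sum)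
qed

lemma integrable_gauss_sum_abs_coord:
  "n \<le> m \<Longrightarrow> integrable (gauss m) (\<lambda>x. \<Sum>l\<in>{1..n}. \<bar>x l\<bar>)"
  using gauss_coord_moments(1) by (intro Bochner_Integration.integrable_sum integrable_abs)
    (auto simp: has_bochner_integral_iff)

lemma integrable_max_coord: "1 \<le> n \<Longrightarrow> n \<le> m \<Longrightarrow> integrable (gauss m) (max_coord n)"
  by (rule Bochner_Integration.integrable_bound[OF integrable_gauss_sum_abs_coord])
    (auto intro!: AE_I2 order.trans[OF abs_max_coord_le] simp: sum_nonneg)

lemma fmax_eq_integral_max_coord: "fmax L = integral\<^sup>L (gauss L) (max_coord L)"
  unfolding fmax_def max_coord_def[abs_def] ..

lemma integrable_argmax_ind_sq_err_sigma_lin: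
  assumes "\<epsilon> \<in> {1..L}"
  shows "integrable (gauss_pair L) (\<lambda>z. argmax_ind L \<epsilon> (fst z) * sq_err sigma_lin L mk mv Rk Rv \<epsilon> z)"
proof (rule Bochner_Integration.integrable_bound)
  show "integrable (gauss_pair L) (sq_err sigma_lin L mk mv Rk Rv \<epsilon>)"
    using has_bochner_integral_sq_err_sigma_lin[OF assms] by (simp add: has_bochner_integral_iff)
  then have "sq_err sigma_lin L mk mv Rk Rv \<epsilon> \<in> borel_measurable (gauss_pair L)"
    by auto
  then show "(\<lambda>z. argmax_ind L \<epsilon> (fst z) * sq_err sigma_lin L mk mv Rk Rv \<epsilon> z)
      \<in> borel_measurable (gauss_pair L)"
    using assms by measurable
  show "AE z in gauss_pair L. norm (argmax_ind L \<epsilon> (fst z) * sq_err sigma_lin L mk mv Rk Rv \<epsilon> z)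
      \<le> norm (sq_err sigma_lin L mk mv Rk Rv \<epsilon> z)"
    by (simp add: argmax_ind_def)
qed

lemma sum_argmax_ind_sq_err_sigma_lin:
  assumes "1 \<le> L" "inj_on (fst z) {1..L}"
  shows "(\<Sum>\<epsilon>\<in>{1..L}. argmax_ind L \<epsilon> (fst z) * sq_err sigma_lin L mk mv Rk Rv \<epsilon> z)
    = 1 - 2 * mv * (1 + mk * max_coord L (fst z)) + (mv\<^sup>2 + Rv\<^sup>2) * lin_norm_sq L mk Rk z
      - 2 * mv * Rk * (\<Sum>\<epsilon>\<in>{1..L}. argmax_ind L \<epsilon> (fst z) * snd z \<epsilon>)"
proof -
  obtain e where e: "e \<in> {1..L}" "fst z e = max_coord L (fst z)"
    using max_coord_attained[OF assms(1)] by blast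
  show ?thesis
    unfolding sum_argmax_ind_mult[OF assms(2) e]
    by (simp add: sq_err_sigma_lin e(2) algebra_simps)
qed

lemma has_bochner_integral_argmax_ind_snd:
  assumes "\<epsilon> \<in> {1..L}"
  shows "has_bochner_integral (gauss_pair L) (\<lambda>z. argmax_ind L \<epsilon> (fst z) * snd z \<epsilon>) 0"
proof -
  interpret prob_space "gauss L" by (rule prob_space_gauss)
  have "integrable (gauss L) (argmax_ind L \<epsilon>)"
    using assms by (intro integrable_const_bound[where B=1]) (auto simp: argmax_ind_def)
  from has_bochner_integral_gauss_pair_mult[OF has_bochner_integral_integrable[OF this]
      gauss_coord_moments(1)[OF assms]]
  show ?thesis by simp
qed

lemma risk_at_sigma_lin_g_argmax:
  assumes L: "1 \<le> L"
  shows "risk_at sigma_lin g_argmax L mk mv Rk Rv = lin_risk (real L) (fmax L) mk mv Rk Rv"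
proof -
  let ?H = "\<lambda>z. 1 - 2 * mv * (1 + mk * max_coord L (fst z)) + (mv\<^sup>2 + Rv\<^sup>2) * lin_norm_sq L mk Rk z
      - 2 * mv * Rk * (\<Sum>\<epsilon>\<in>{1..L}. argmax_ind L \<epsilon> (fst z) * snd z \<epsilon>)"
  have max: "has_bochner_integral (gauss_pair L) (\<lambda>z. max_coord L (fst z)) (fmax L)"
    using integrable_max_coord[OF L order.refl]
    by (intro has_bochner_integral_gauss_pair_fst_snd(1))
      (simp add: fmax_eq_integral_max_coord has_bochner_integral_iff)
  have H: "has_bochner_integral (gauss_pair L) ?H
      (1 - 2 * mv * (1 + mk * fmax L) + (mv\<^sup>2 + Rv\<^sup>2) * (real L * (1 + mk\<^sup>2 + Rk\<^sup>2))
       - 2 * mv * Rk * (\<Sum>\<epsilon>\<in>{1..L}. 0))"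
    by (intro has_bochner_integral_add has_bochner_integral_diff has_bochner_integral_mult_right
        has_bochner_integral_sum has_bochner_integral_gauss_pair_const has_bochner_integral_lin_norm_sq
        has_bochner_integral_argmax_ind_snd max) auto
  have "risk_at sigma_lin g_argmax L mk mv Rk Rv
      = (\<Sum>\<epsilon>\<in>{1..L}. \<integral>z. argmax_ind L \<epsilon> (fst z) * sq_err sigma_lin L mk mv Rk Rv \<epsilon> z \<partial>gauss_pair L)"
    using L by (simp add: risk_at_def g_argmax_eq sum_distrib_left[symmetric] mult.assoc)
  also have "\<dots> = (\<integral>z. (\<Sum>\<epsilon>\<in>{1..L}. argmax_ind L \<epsilon> (fst z) * sq_err sigma_lin L mk mv Rk Rv \<epsilon> z)
      \<partial>gauss_pair L)"
    by (rule Bochner_Integration.integral_sum[symmetric]) (rule integrable_argmax_ind_sq_err_sigma_lin)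
  also have "\<dots> = integral\<^sup>L (gauss_pair L) ?H"
  proof (rule integral_cong_AE)
    show "AE z in gauss_pair L.
        (\<Sum>\<epsilon>\<in>{1..L}. argmax_ind L \<epsilon> (fst z) * sq_err sigma_lin L mk mv Rk Rv \<epsilon> z) = ?H z"
      using AE_gauss_pair_fst[OF AE_gauss_inj_on]
      by eventually_elim (rule sum_argmax_ind_sq_err_sigma_lin[OF L])
    show "(\<lambda>z. \<Sum>\<epsilon>\<in>{1..L}. argmax_ind L \<epsilon> (fst z) * sq_err sigma_lin L mk mv Rk Rv \<epsilon> z)
        \<in> borel_measurable (gauss_pair L)"
      by (intro borel_measurable_integrable Bochner_Integration.integrable_sum
          integrable_argmax_ind_sq_err_sigma_lin)
    show "?H \<in> borel_measurable (gauss_pair L)"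
      using H by (rule borel_measurable_has_bochner_integral)
  qed
  also have "\<dots> = lin_risk (real L) (fmax L) mk mv Rk Rv"
    using H by (simp add: has_bochner_integral_iff lin_risk_def algebra_simps)
  finally show ?thesis .
qed

section \<open>Concavity of the expected maximum\<close>

definition overshoot :: "real \<Rightarrow> real" where
  "overshoot a = (\<integral>y. max (y - a) 0 \<partial>std_normal)"

lemma integrable_std_normal_abs: "integrable std_normal abs"
  using has_bochner_integral_std_normal_id by (auto simp: has_bochner_integral_iff)

lemma integrable_overshoot_integrand: "integrable std_normal (\<lambda>y. max (y - a) 0)"
proof -
  interpret prob_space std_normal by (rule prob_space_std_normal)
  show ?thesis
    by (rule Bochner_Integration.integrable_bound[where f="\<lambda>y. \<bar>y\<bar> + \<bar>a\<bar>"])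
      (auto intro!: Bochner_Integration.integrable_add integrable_std_normal_abs)
qed

lemma overshoot_nonneg: "0 \<le> overshoot a"
  unfolding overshoot_def by (rule integral_nonneg_AE) auto

lemma overshoot_antimono: "a \<le> b \<Longrightarrow> overshoot b \<le> overshoot a"
  unfolding overshoot_def by (intro integral_mono integrable_overshoot_integrand) auto

lemma overshoot_le: "overshoot a \<le> (\<integral>y. \<bar>y\<bar> \<partial>std_normal) + \<bar>a\<bar>"
proof -
  interpret prob_space std_normal by (rule prob_space_std_normal)
  have "overshoot a \<le> (\<integral>y. \<bar>y\<bar> + \<bar>a\<bar> \<partial>std_normal)"
    unfolding overshoot_def
    by (intro integral_mono integrable_overshoot_integrand Bochner_Integration.integrable_add
        integrable_std_normal_abs) auto
  also have "\<dots> = (\<integral>y. \<bar>y\<bar> \<partial>std_normal) + \<bar>a\<bar>"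
    using integrable_std_normal_abs prob_space by simp
  finally show ?thesis .
qed

lemma borel_measurable_overshoot [measurable]: "overshoot \<in> borel_measurable borel"
proof -
  have "mono (\<lambda>t. overshoot (- t))"
    by (auto simp: mono_def intro!: overshoot_antimono)
  then have "(\<lambda>t. overshoot (- t)) \<in> borel_measurable borel"
    by (rule borel_measurable_mono)
  then have "(\<lambda>t. overshoot (- (- t))) \<in> borel_measurable borel"
    by measurable
  then show ?thesis
    by simp
qed

lemma integral_std_normal_max: "(\<integral>y. max y a \<partial>std_normal) = a + overshoot a"
proof -
  interpret prob_space std_normal by (rule prob_space_std_normal)
  have "(\<integral>y. max y a \<partial>std_normal) = (\<integral>y. a + max (y - a) 0 \<partial>std_normal)"
    by (rule Bochner_Integration.integral_cong) auto
  also have "\<dots> = a + overshoot a"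
    unfolding overshoot_def using integrable_overshoot_integrand[of a] prob_space by simp
  finally show ?thesis .
qed

lemma integrable_overshoot_max_coord:
  assumes "1 \<le> n" "n \<le> m"
  shows "integrable (gauss m) (\<lambda>x. overshoot (max_coord n x))"
proof (rule Bochner_Integration.integrable_bound)
  interpret prob_space "gauss m" by (rule prob_space_gauss)
  show "integrable (gauss m) (\<lambda>x. (\<integral>y. \<bar>y\<bar> \<partial>std_normal) + (\<Sum>l\<in>{1..n}. \<bar>x l\<bar>))"
    using assms by (intro Bochner_Integration.integrable_add integrable_gauss_sum_abs_coord) auto
  show "(\<lambda>x. overshoot (max_coord n x)) \<in> borel_measurable (gauss m)"
    using assms by measurable
  have "0 \<le> (\<integral>y. \<bar>y\<bar> \<partial>std_normal)"
    by (rule integral_nonneg_AE) auto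
  then show "AE x in gauss m. norm (overshoot (max_coord n x))
      \<le> norm ((\<integral>y. \<bar>y\<bar> \<partial>std_normal) + (\<Sum>l\<in>{1..n}. \<bar>x l\<bar>))"
    using overshoot_nonneg abs_max_coord_le[OF assms(1)]
    by (intro AE_I2) (auto simp: sum_nonneg intro!: order.trans[OF overshoot_le])
qed

lemma integral_gauss_Suc:
  fixes f :: "(nat \<Rightarrow> real) \<Rightarrow> real"
  assumes "integrable (gauss (Suc n)) f"
  shows "integral\<^sup>L (gauss (Suc n)) f = (\<integral>x. (\<integral>y. f (x(Suc n := y)) \<partial>std_normal) \<partial>gauss n)"
proof -
  have "gauss (Suc n) = PiM (insert (Suc n) {1..n}) (\<lambda>_. std_normal)"
    unfolding gauss_def by (simp add: atLeastAtMostSuc_conv)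
  then show ?thesis
    using std_normal_product.product_integral_insert[of "{1..n}" "Suc n" f] assms
    by (simp add: gauss_def)
qed

lemma max_coord_upd_Suc: "max_coord n (x(Suc n := y)) = max_coord n x"
  unfolding max_coord_def by (intro arg_cong[where f=Max] image_cong) auto

lemma max_coord_Suc: "1 \<le> n \<Longrightarrow> max_coord (Suc n) x = max (x (Suc n)) (max_coord n x)"
  unfolding max_coord_def using atLeastAtMostSuc_conv[of 1 n] by (simp add: Max_insert)

lemma fmax_Suc:
  assumes "1 \<le> n"
  shows "fmax (Suc n) = fmax n + (\<integral>x. overshoot (max_coord n x) \<partial>gauss n)"
proof -
  have "fmax (Suc n) = (\<integral>x. (\<integral>y. max_coord (Suc n) (x(Suc n := y)) \<partial>std_normal) \<partial>gauss n)"
    unfolding fmax_eq_integral_max_coord using assms by (intro integral_gauss_Suc integrable_max_coord) auto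
  also have "\<dots> = (\<integral>x. max_coord n x + overshoot (max_coord n x) \<partial>gauss n)"
    using assms by (intro Bochner_Integration.integral_cong refl)
      (simp add: max_coord_Suc max_coord_upd_Suc integral_std_normal_max)
  also have "\<dots> = fmax n + (\<integral>x. overshoot (max_coord n x) \<partial>gauss n)"
    unfolding fmax_eq_integral_max_coord
    using assms by (simp add: integrable_max_coord integrable_overshoot_max_coord)
  finally show ?thesis .
qed

lemma fmax_increment_antimono:
  assumes "1 \<le> n"
  shows "fmax (Suc (Suc n)) - fmax (Suc n) \<le> fmax (Suc n) - fmax n"
proof -
  interpret prob_space std_normal by (rule prob_space_std_normal)
  have "fmax (Suc (Suc n)) - fmax (Suc n) = (\<integral>x. overshoot (max_coord (Suc n) x) \<partial>gauss (Suc n))"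
    using fmax_Suc[of "Suc n"] assms by simp
  also have "\<dots> \<le> (\<integral>x. overshoot (max_coord n x) \<partial>gauss (Suc n))"
    using assms by (intro integral_mono integrable_overshoot_max_coord overshoot_antimono)
      (auto simp: max_coord_Suc)
  also have "\<dots> = (\<integral>x. (\<integral>y. overshoot (max_coord n (x(Suc n := y))) \<partial>std_normal) \<partial>gauss n)"
    using assms by (intro integral_gauss_Suc integrable_overshoot_max_coord) auto
  also have "\<dots> = fmax (Suc n) - fmax n"
    using fmax_Suc[OF assms] prob_space by (simp add: max_coord_upd_Suc)
  finally show ?thesis .
qed

lemma fmax_one: "fmax 1 = 0"
  using gauss_coord_moments(1)[of 1 1] by (simp add: fmax_def has_bochner_integral_iff)

lemma fmax_nonneg: "1 \<le> n \<Longrightarrow> 0 \<le> fmax n"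
proof (induction n rule: dec_induct)
  case (step n)
  have "0 \<le> (\<integral>x. overshoot (max_coord n x) \<partial>gauss n)"
    by (rule integral_nonneg_AE) (simp add: overshoot_nonneg)
  then show ?case
    using fmax_Suc[OF step.hyps(1)] step.IH by simp
qed (use fmax_one in simp)

lemma concave_seq_le_tangent:
  fixes f :: "nat \<Rightarrow> real"
  assumes concave: "\<And>k. 1 \<le> k \<Longrightarrow> f (Suc (Suc k)) - f (Suc k) \<le> f (Suc k) - f k"
    and n: "1 \<le> n" and k: "1 \<le> k"
  shows "f k \<le> f n + (real k - real n) * (f (Suc n) - f n)"
proof -
  have decr: "f (Suc j) - f j \<le> f (Suc i) - f i" if "1 \<le> i" "i \<le> j" for i j
    using that(2)
  proof (induction j rule: dec_induct)
    case (step j)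
    then show ?case using concave[of j] that(1) by simp
  qed simp
  show ?thesis
  proof (cases "n \<le> k")
    case True
    then show ?thesis
    proof (induction k rule: dec_induct)
      case (step k)
      then show ?case
        using decr[OF n step.hyps(1)] by (simp add: algebra_simps)
    qed simp
  next
    case False
    then have "k \<le> n" by simp
    then show ?thesis
    proof (induction k rule: inc_induct)
      case (step j)
      then show ?case
        using decr[of j n] k by (simp add: algebra_simps)
    qed simp
  qed
qed

section \<open>The softmax activation\<close>

lemma sum_squares_ge_inverse_card:
  fixes s :: "'a \<Rightarrow> real"
  assumes "finite A" "A \<noteq> {}" and sum: "(\<Sum>a\<in>A. s a) = 1"
  shows "1 / real (card A) \<le> (\<Sum>a\<in>A. (s a)\<^sup>2)"
proof -
  define n where "n = real (card A)"
  have n: "0 < n"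
    using assms(1,2) by (simp add: n_def card_gt_0_iff)
  have "0 \<le> (\<Sum>a\<in>A. (s a - 1 / n)\<^sup>2)"
    by (intro sum_nonneg) auto
  also have "\<dots> = (\<Sum>a\<in>A. (s a)\<^sup>2) - 2 / n * (\<Sum>a\<in>A. s a) + n * (1 / n)\<^sup>2"
    by (simp add: power2_diff sum.distrib sum_subtractf sum_distrib_left n_def mult.assoc)
  also have "\<dots> = (\<Sum>a\<in>A. (s a)\<^sup>2) - 1 / n"
    using n sum by (simp add: power2_eq_square field_simps)
  finally show ?thesis
    by (simp add: n_def)
qed

lemma sum_sigma_softmax: "1 \<le> L \<Longrightarrow> (\<Sum>l\<in>{1..L}. sigma_softmax L x l) = 1"
  unfolding sigma_softmax_def
  by (simp add: sum_divide_distrib[symmetric] sum_pos[THEN less_imp_neq, symmetric])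

lemma sigma_softmax_nonneg: "0 \<le> sigma_softmax L x l"
  unfolding sigma_softmax_def by (simp add: sum_nonneg)

lemma sigma_softmax_le_1:
  assumes "l \<in> {1..L}"
  shows "sigma_softmax L x l \<le> 1"
proof -
  have le: "exp (x l) \<le> (\<Sum>l'\<in>{1..L}. exp (x l'))"
    using assms by (intro member_le_sum) auto
  moreover have "0 < (\<Sum>l'\<in>{1..L}. exp (x l'))"
    using le exp_gt_zero[of "x l"] by linarith
  ultimately show ?thesis
    unfolding sigma_softmax_def by simp
qed

lemma abs_sq_err_sigma_softmax_le:
  assumes "\<epsilon> \<in> {1..L}"
  shows "\<bar>sq_err sigma_softmax L mk mv Rk Rv \<epsilon> z\<bar> \<le> 1 + 2 * \<bar>mv\<bar> + (mv\<^sup>2 + Rv\<^sup>2) * real L"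
proof -
  define s where "s = sigma_softmax L (\<lambda>l. mk * fst z l + Rk * snd z l)"
  define Q where "Q = (\<Sum>l\<in>{1..L}. (s l)\<^sup>2)"
  have s: "0 \<le> s l" "s l \<le> 1" if "l \<in> {1..L}" for l
    using that sigma_softmax_nonneg sigma_softmax_le_1 unfolding s_def by auto
  have "Q \<le> (\<Sum>l\<in>{1..L}. 1)"
    unfolding Q_def using s by (intro sum_mono) (simp add: power_le_one)
  then have Q: "0 \<le> Q" "Q \<le> real L"
    unfolding Q_def by (auto intro: sum_nonneg)
  have "\<bar>mv * s \<epsilon>\<bar> \<le> \<bar>mv\<bar>"
    using s[OF assms] by (simp add: abs_mult mult_left_le)
  moreover have "(mv\<^sup>2 + Rv\<^sup>2) * Q \<le> (mv\<^sup>2 + Rv\<^sup>2) * real L"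
    using Q by (intro mult_left_mono) auto
  moreover have "0 \<le> (mv\<^sup>2 + Rv\<^sup>2) * Q"
    using Q by simp
  ultimately show ?thesis
    unfolding sq_err_def Let_def s_def[symmetric] Q_def[symmetric] by linarith
qed

lemma integrable_sq_err_sigma_softmax:
  assumes "\<epsilon> \<in> {1..L}"
  shows "integrable (gauss_pair L) (sq_err sigma_softmax L mk mv Rk Rv \<epsilon>)"
proof -
  interpret prob_space "gauss_pair L" by (rule prob_space_gauss_pair)
  show ?thesis
  proof (rule integrable_const_bound[where B="1 + 2 * \<bar>mv\<bar> + (mv\<^sup>2 + Rv\<^sup>2) * real L"])
    show "sq_err sigma_softmax L mk mv Rk Rv \<epsilon> \<in> borel_measurable (gauss_pair L)"
      using assms unfolding sq_err_def sigma_softmax_def Let_def by measurable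
  qed (use abs_sq_err_sigma_softmax_le[OF assms] in simp)
qed

lemma mean_sq_err_sigma_softmax_ge:
  assumes L: "1 \<le> L"
  shows "1 - 1 / real L \<le> 1 / real L * (\<Sum>\<epsilon>\<in>{1..L}. sq_err sigma_softmax L mk mv Rk Rv \<epsilon> z)"
proof -
  define s where "s = sigma_softmax L (\<lambda>l. mk * fst z l + Rk * snd z l)"
  define Q where "Q = (\<Sum>l\<in>{1..L}. (s l)\<^sup>2)"
  have sum_s: "(\<Sum>l\<in>{1..L}. s l) = 1"
    unfolding s_def using L by (rule sum_sigma_softmax)
  have Q: "1 / real L \<le> Q"
    using sum_squares_ge_inverse_card[of "{1..L}" s] L sum_s by (simp add: Q_def)
  have "1 / real L * (\<Sum>\<epsilon>\<in>{1..L}. sq_err sigma_softmax L mk mv Rk Rv \<epsilon> z)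
      = 1 / real L * (\<Sum>\<epsilon>\<in>{1..L}. 1 - 2 * mv * s \<epsilon> + (mv\<^sup>2 + Rv\<^sup>2) * Q)"
    by (simp add: sq_err_def Let_def s_def Q_def)
  also have "\<dots> = 1 / real L * (real L - 2 * mv * (\<Sum>\<epsilon>\<in>{1..L}. s \<epsilon>) + real L * ((mv\<^sup>2 + Rv\<^sup>2) * Q))"
    by (simp add: sum.distrib sum_subtractf sum_distrib_left[symmetric])
  also have "\<dots> = 1 - 2 * mv / real L + (mv\<^sup>2 + Rv\<^sup>2) * Q"
    using L unfolding sum_s by (simp add: field_simps)
  also have "\<dots> \<ge> 1 - 2 * mv / real L + mv\<^sup>2 * (1 / real L)"
    using Q by (intro add_left_mono mult_mono) auto
  also have "1 - 2 * mv / real L + mv\<^sup>2 * (1 / real L) = 1 - 1 / real L + (mv - 1)\<^sup>2 / real L"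
    using L by (simp add: power2_diff field_simps)
  finally have "1 - 1 / real L + (mv - 1)\<^sup>2 / real L
      \<le> 1 / real L * (\<Sum>\<epsilon>\<in>{1..L}. sq_err sigma_softmax L mk mv Rk Rv \<epsilon> z)" .
  moreover have "0 \<le> (mv - 1)\<^sup>2 / real L"
    by simp
  ultimately show ?thesis
    by linarith
qed

lemma risk_at_sigma_softmax_g_one_ge:
  assumes L: "1 \<le> L"
  shows "1 - 1 / real L \<le> risk_at sigma_softmax g_one L mk mv Rk Rv"
proof -
  interpret prob_space "gauss_pair L" by (rule prob_space_gauss_pair)
  have int: "integrable (gauss_pair L)
      (\<lambda>z. 1 / real L * (\<Sum>\<epsilon>\<in>{1..L}. sq_err sigma_softmax L mk mv Rk Rv \<epsilon> z))"
    by (intro integrable_mult_right Bochner_Integration.integrable_sum integrable_sq_err_sigma_softmax)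
  have "risk_at sigma_softmax g_one L mk mv Rk Rv
      = (\<integral>z. 1 / real L * (\<Sum>\<epsilon>\<in>{1..L}. sq_err sigma_softmax L mk mv Rk Rv \<epsilon> z) \<partial>gauss_pair L)"
    unfolding risk_at_def g_one_def
    using integrable_sq_err_sigma_softmax by (simp add: Bochner_Integration.integral_sum)
  moreover have "1 - 1 / real L \<le> \<dots>"
    using int by (rule integral_ge_const) (rule AE_I2, rule mean_sq_err_sigma_softmax_ge[OF L])
  ultimately show ?thesis
    by simp
qed

lemma risk_at_sigma_softmax_g_one_uniform:
  assumes L: "1 \<le> L"
  shows "risk_at sigma_softmax g_one L 0 1 0 0 = 1 - 1 / real L"
proof -
  interpret prob_space "gauss_pair L" by (rule prob_space_gauss_pair)
  have "sq_err sigma_softmax L 0 1 0 0 \<epsilon> z = 1 - 1 / real L" for \<epsilon> z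
    using L by (simp add: sq_err_def sigma_softmax_def power2_eq_square field_simps)
  then show ?thesis
    using L by (simp add: risk_at_def g_one_def prob_space)
qed

section \<open>Averaging over the length\<close>

lemma inverse_tangent_bounds:
  fixes x M :: real
  assumes "1 \<le> x" "0 < M"
  shows "2 / M + (- 1 / M\<^sup>2) * x \<le> 1 / x"
    and "1 / x \<le> 2 / M + ((- 1 / M\<^sup>2) * x + (1 / M\<^sup>2) * (x - M)\<^sup>2)"
proof -
  have eq: "1 / x - (2 / M + (- 1 / M\<^sup>2) * x) = (x - M)\<^sup>2 / (x * M\<^sup>2)"
    using assms by (simp add: field_simps power2_eq_square)
  have "0 \<le> (x - M)\<^sup>2 / (x * M\<^sup>2)"
    using assms by simp
  then show "2 / M + (- 1 / M\<^sup>2) * x \<le> 1 / x"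
    using eq by linarith
  have "(x - M)\<^sup>2 / (x * M\<^sup>2) \<le> (x - M)\<^sup>2 / (1 * M\<^sup>2)"
    using assms by (intro divide_left_mono mult_right_mono) auto
  then show "1 / x \<le> 2 / M + ((- 1 / M\<^sup>2) * x + (1 / M\<^sup>2) * (x - M)\<^sup>2)"
    using eq by simp
qed

lemma EL_cong: "(\<And>L. L \<in> {1..Lbar} \<Longrightarrow> f L = h L) \<Longrightarrow> EL p Lbar f = EL p Lbar h"
  unfolding EL_def by (intro sum.cong) auto

lemma EL_add: "EL p Lbar (\<lambda>L. f L + h L) = EL p Lbar f + EL p Lbar h"
  unfolding EL_def by (simp add: distrib_left sum.distrib)

lemma EL_mult_left: "EL p Lbar (\<lambda>L. c * f L) = c * EL p Lbar f"
  unfolding EL_def by (simp add: sum_distrib_left mult.left_commute)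

locale length_law =
  fixes p :: "nat \<Rightarrow> real" and Lbar :: nat
  assumes nonneg: "\<And>L. L \<in> {1..Lbar} \<Longrightarrow> 0 \<le> p L"
    and total: "(\<Sum>L\<in>{1..Lbar}. p L) = 1"
begin

lemma EL_const: "EL p Lbar (\<lambda>_. c) = c"
  unfolding EL_def using total by (simp add: sum_distrib_right[symmetric])

lemma EL_mono: "(\<And>L. L \<in> {1..Lbar} \<Longrightarrow> f L \<le> h L) \<Longrightarrow> EL p Lbar f \<le> EL p Lbar h"
  unfolding EL_def by (intro sum_mono mult_left_mono nonneg) auto

lemma EL_affine: "EL p Lbar (\<lambda>L. a + b * f L) = a + b * EL p Lbar f"
  by (simp add: EL_add EL_mult_left EL_const)

lemma EL_real_ge_1: "1 \<le> EL p Lbar real"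
  using EL_mono[of "\<lambda>_. 1" real] by (simp add: EL_const)

lemma EL_lin_risk:
  "EL p Lbar (\<lambda>L. lin_risk (real L) (f L) mk mv Rk Rv)
    = lin_risk (EL p Lbar real) (EL p Lbar f) mk mv Rk Rv"
proof -
  define c where "c = (mv\<^sup>2 + Rv\<^sup>2) * (1 + mk\<^sup>2 + Rk\<^sup>2)"
  have "(\<lambda>L. lin_risk (real L) (f L) mk mv Rk Rv) = (\<lambda>L. (1 - 2 * mv) + ((- 2 * mv * mk) * f L + c * real L))"
    by (simp add: fun_eq_iff lin_risk_def c_def algebra_simps)
  moreover have "EL p Lbar (\<lambda>L. (1 - 2 * mv) + ((- 2 * mv * mk) * f L + c * real L))
      = (1 - 2 * mv) + ((- 2 * mv * mk) * EL p Lbar f + c * EL p Lbar real)"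
    by (simp only: EL_add EL_mult_left EL_const)
  ultimately show ?thesis
    by (simp add: lin_risk_def c_def algebra_simps)
qed

lemma Etil_sigma_lin_g_argmax:
  "Etil p Lbar sigma_lin g_argmax mk mv Rk Rv
    = lin_risk (EL p Lbar real) (EL p Lbar fmax) mk mv Rk Rv"
  unfolding Etil_eq_EL_risk_at EL_lin_risk[symmetric]
  by (intro EL_cong risk_at_sigma_lin_g_argmax) auto

lemma Etil_sigma_lin_g_one:
  "Etil p Lbar sigma_lin g_one mk mv Rk Rv = lin_risk (EL p Lbar real) 0 mk mv Rk Rv"
proof -
  have "Etil p Lbar sigma_lin g_one mk mv Rk Rv
      = EL p Lbar (\<lambda>L. lin_risk (real L) ((\<lambda>_. 0) L) mk mv Rk Rv)"
    unfolding Etil_eq_EL_risk_at by (intro EL_cong risk_at_sigma_lin_g_one) auto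
  then show ?thesis
    unfolding EL_lin_risk by (simp add: EL_const)
qed

lemma Eopt_sigma_lin_g_argmax:
  "Eopt p Lbar sigma_lin g_argmax = 1 - (1 + (EL p Lbar fmax)\<^sup>2) / EL p Lbar real"
  unfolding Eopt_def Etil_sigma_lin_g_argmax using EL_real_ge_1 by (intro Inf_lin_risk) linarith

lemma Eopt_sigma_lin_g_one: "Eopt p Lbar sigma_lin g_one = 1 - 1 / EL p Lbar real"
  unfolding Eopt_def Etil_sigma_lin_g_one using EL_real_ge_1 Inf_lin_risk[of "EL p Lbar real" 0] by simp

lemma Eopt_sigma_softmax_g_one: "Eopt p Lbar sigma_softmax g_one = 1 - EL p Lbar (\<lambda>L. 1 / real L)"
  unfolding Eopt_def
proof (rule cInf_eq_minimum)
  have "Etil p Lbar sigma_softmax g_one 0 1 0 0 = EL p Lbar (\<lambda>L. 1 + (- 1) * (1 / real L))"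
    unfolding Etil_eq_EL_risk_at by (intro EL_cong) (simp add: risk_at_sigma_softmax_g_one_uniform)
  then show "1 - EL p Lbar (\<lambda>L. 1 / real L)
      \<in> {Etil p Lbar sigma_softmax g_one mk mv Rk Rv | mk mv Rk Rv. True}"
    unfolding EL_affine by (metis (mono_tags, lifting) mem_Collect_eq mult_minus1 diff_conv_add_uminus)
next
  fix x assume "x \<in> {Etil p Lbar sigma_softmax g_one mk mv Rk Rv | mk mv Rk Rv. True}"
  then obtain mk mv Rk Rv where x: "x = Etil p Lbar sigma_softmax g_one mk mv Rk Rv"
    by blast
  have "EL p Lbar (\<lambda>L. 1 + (- 1) * (1 / real L)) \<le> x"
    unfolding x Etil_eq_EL_risk_at
    by (intro EL_mono) (use risk_at_sigma_softmax_g_one_ge in auto)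
  then show "1 - EL p Lbar (\<lambda>L. 1 / real L) \<le> x"
    unfolding EL_affine by simp
qed

lemma inverse_EL_real_le: "1 / EL p Lbar real \<le> EL p Lbar (\<lambda>L. 1 / real L)"
proof -
  define M where "M = EL p Lbar real"
  have M: "0 < M"
    using EL_real_ge_1 by (simp add: M_def)
  have "EL p Lbar (\<lambda>L. 2 / M + (- 1 / M\<^sup>2) * real L) \<le> EL p Lbar (\<lambda>L. 1 / real L)"
    by (intro EL_mono inverse_tangent_bounds(1)[OF _ M]) auto
  moreover have "2 / M + (- 1 / M\<^sup>2) * M = 1 / M"
    using M by (simp add: field_simps power2_eq_square)
  ultimately show ?thesis
    unfolding EL_affine M_def[symmetric] by simp
qed

lemma EL_inverse_eq_if_variance_zero:
  assumes "EL p Lbar (\<lambda>L. (real L - EL p Lbar real)\<^sup>2) = 0"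
  shows "EL p Lbar (\<lambda>L. 1 / real L) = 1 / EL p Lbar real"
proof -
  define M where "M = EL p Lbar real"
  have M: "0 < M"
    using EL_real_ge_1 by (simp add: M_def)
  have "EL p Lbar (\<lambda>L. 1 / real L)
      \<le> EL p Lbar (\<lambda>L. 2 / M + ((- 1 / M\<^sup>2) * real L + (1 / M\<^sup>2) * (real L - M)\<^sup>2))"
    by (intro EL_mono inverse_tangent_bounds(2)[OF _ M]) auto
  also have "\<dots> = 2 / M + ((- 1 / M\<^sup>2) * M + (1 / M\<^sup>2) * 0)"
    by (simp only: EL_add EL_mult_left EL_const M_def[symmetric] assms[folded M_def])
  also have "\<dots> = 1 / M"
    using M by (simp add: field_simps power2_eq_square)
  finally show ?thesis
    using inverse_EL_real_le unfolding M_def by linarith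
qed

lemma EL_fmax_nonneg: "0 \<le> EL p Lbar fmax"
  using EL_mono[of "\<lambda>_. 0" fmax] fmax_nonneg by (simp add: EL_const)

lemma EL_fmax_le_fmax_interp: "EL p Lbar fmax \<le> fmax_interp (EL p Lbar real)"
proof -
  define M where "M = EL p Lbar real"
  define n where "n = nat \<lfloor>M\<rfloor>"
  define d where "d = fmax (Suc n) - fmax n"
  have n: "1 \<le> n"
    using EL_real_ge_1 unfolding n_def M_def by linarith
  have "EL p Lbar fmax \<le> EL p Lbar (\<lambda>L. (fmax n - real n * d) + d * real L)"
    using concave_seq_le_tangent[where f=fmax, OF fmax_increment_antimono n]
    by (intro EL_mono) (auto simp: d_def algebra_simps)
  also have "\<dots> = fmax_interp M"
    unfolding EL_affine fmax_interp_def Let_def n_def[symmetric] d_def M_def[symmetric]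
    by (simp add: algebra_simps)
  finally show ?thesis
    unfolding M_def .
qed

end

theorem corollary3:
  fixes p :: "nat \<Rightarrow> real" and Lbar :: nat
  assumes nonneg: "\<And>L. L \<in> {1..Lbar} \<Longrightarrow> p L \<ge> 0"
    and total: "(\<Sum>L\<in>{1..Lbar}. p L) = 1"
  shows
    "Eopt p Lbar sigma_lin g_argmax
        = 1 - (1 + (EL p Lbar fmax)\<^sup>2) / EL p Lbar real
     \<and> Eopt p Lbar sigma_lin g_argmax
        \<ge> 1 - (1 + (fmax_interp (EL p Lbar real))\<^sup>2) / EL p Lbar real
     \<and> Eopt p Lbar sigma_lin g_one = 1 - 1 / EL p Lbar real
     \<and> Eopt p Lbar sigma_softmax g_one = 1 - EL p Lbar (\<lambda>L. 1 / real L)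
     \<and> Eopt p Lbar sigma_lin g_one \<ge> Eopt p Lbar sigma_softmax g_one
     \<and> (EL p Lbar (\<lambda>L. (real L - EL p Lbar real)\<^sup>2) = 0
          \<longrightarrow> Eopt p Lbar sigma_lin g_one = Eopt p Lbar sigma_softmax g_one)"
proof -
  interpret length_law p Lbar
    using assms by unfold_locales auto
  have "(EL p Lbar fmax)\<^sup>2 \<le> (fmax_interp (EL p Lbar real))\<^sup>2"
    using EL_fmax_le_fmax_interp EL_fmax_nonneg by (rule power_mono)
  then have "(1 + (EL p Lbar fmax)\<^sup>2) / EL p Lbar real
      \<le> (1 + (fmax_interp (EL p Lbar real))\<^sup>2) / EL p Lbar real"
    using EL_real_ge_1 by (intro divide_right_mono) auto
  then show ?thesis
    using Eopt_sigma_lin_g_argmax Eopt_sigma_lin_g_one Eopt_sigma_softmax_g_one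
      inverse_EL_real_le EL_inverse_eq_if_variance_zero
    by auto
qed

end
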